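(* Let $S^{\circ}_{n'}=\langle s_{1'},s_2,\dots,s_{n-1}\rangle\le D_n$ and $\pi\in S^{\circ}_{n'}$. Let $\Phi(\pi)=\pi'^{(1)}\cdots\pi'^{(z)}$ be the standard OGS elementary factorization of $\Phi(\pi)\in S_n$, with $\pi'^{(v)}=\prod_{j=1}^{m^{(v)}}t_{h^{(v)}_j}^{\imath^{(v)}_j}$. For each $v$ let $\tau_v\in D_n$ be the element $\prod_{j=1}^{m^{(v)}}t_{h^{(v)}_j}^{\imath^{(v)}_j}$ computed in $D_n$. Then $\pi=\pi_1\cdot\pi_2\cdots\pi_z$, where $\pi_v=\tau_v$ if $\operatorname{maj}(\pi'^{(v)})=h^{(v)}_1$, and $\pi_v=w_{\operatorname{maj}(\pi'^{(v)})}\cdot\tau_v$ if $\operatorname{maj}(\pi'^{(v)})<h^{(v)}_1$.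
   Context: $D_n$ ($n\ge2$) is the Coxeter group with generators $s_{1'},s_1,\dots,s_{n-1}$ and relations $s^2=1$, $(s_i s_{i+1})^3=1$, $(s_is_j)^2=1$ for $|i-j|\ge 2$, $(s_{1'}s_2)^3=1$, $(s_{1'}s_i)^2=1$ for $i\ne 2$. In $D_n$ (and in $S_n$): $t_k=s_1\cdots s_{k-1}$; in $D_n$: $w_k=s_k s_{k-1}\cdots s_2 s_1 s_{1'} s_2\cdots s_k$ ($1\le k\le n-1$). $\Phi:D_n\to S_n$ is the homomorphism $s_{1'}\mapsto s_1$, $s_i\mapsto s_i$ ($S_n$ generated by $s_i=(i,i+1)$). Every $\sigma\in S_n$ has a unique standard OGS canonical form $t_2^{i_2}\cdots t_n^{i_n}$ ($0\le i_k<k$); writing only nonzero factors $\sigma=t_{k_1}^{i_{k_1}}\cdots t_{k_m}^{i_{k_m}}$, $\operatorname{maj}(\sigma)=\sum_j i_{k_j}$, and $\sigma$ is a standard OGS elementary element if $\sum_j i_{k_j}\le k_1$. The standard OGS elementary factorization of $\sigma$: $\sigma=\prod_{v=1}^{z}\sigma^{(v)}$ with $\sigma^{(v)}=\prod_{j=1}^{m^{(v)}}t_{h^{(v)}_j}^{\imath^{(v)}_j}$ in standard OGS canonical form, all $\imath^{(v)}_j>0$, $\operatorname{maj}(\sigma^{(1)})\le h^{(1)}_1$, and $h^{(v-1)}_{m^{(v-1)}}\le\operatorname{maj}(\sigma^{(v)})\le h^{(v)}_1$ for $2\le v\le z$, where $z$ is the minimal number for which such a presentation exists (it is unique). *)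

theory Defs
  imports Main
begin

text \<open>Abstract generator symbols: Gp stands for s_{1'}, G i for s_i.\<close>
datatype gen = Gp | G nat

definition sS :: "nat \<Rightarrow> nat \<Rightarrow> nat" where
  "sS i = (\<lambda>x. if x = i then i + 1 else if x = i + 1 then i else x)"

definition prodS :: "(nat \<Rightarrow> nat) list \<Rightarrow> nat \<Rightarrow> nat" where
  "prodS fs = foldr (\<circ>) fs id"

definition tS :: "nat \<Rightarrow> nat \<Rightarrow> nat" where
  "tS k = prodS (map sS [1..<k])"

text \<open>Exponent vectors of standard OGS canonical forms t_2^{i_2} ... t_n^{i_n}.\<close>
definition ogs_exp :: "nat \<Rightarrow> (nat \<Rightarrow> nat) \<Rightarrow> bool" where
  "ogs_exp n e \<longleftrightarrow> (\<forall>k. (2 \<le> k \<and> k \<le> n \<longrightarrow> e k < k) \<and> (\<not> (2 \<le> k \<and> k \<le> n) \<longrightarrow> e k = 0))"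

definition ogs_prod :: "nat \<Rightarrow> (nat \<Rightarrow> nat) \<Rightarrow> nat \<Rightarrow> nat" where
  "ogs_prod n e = prodS (map (\<lambda>k. tS k ^^ e k) [2..<n+1])"

definition maj :: "nat \<Rightarrow> (nat \<Rightarrow> nat) \<Rightarrow> nat" where
  "maj n \<sigma> = (\<Sum>k\<in>{2..n}. (THE e. ogs_exp n e \<and> \<sigma> = ogs_prod n e) k)"

text \<open>A factor is given as the list of its nonzero OGS factors (h_j, i_j), i.e.
  t_{h_1}^{i_1} ... t_{h_m}^{i_m}, required to be in standard OGS canonical form
  with all exponents positive.\<close>
definition factor_ok :: "nat \<Rightarrow> (nat \<times> nat) list \<Rightarrow> bool" where
  "factor_ok n f \<longleftrightarrow> f \<noteq> [] \<and> sorted_wrt (<) (map fst f) \<and>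
     (\<forall>(h, i) \<in> set f. 2 \<le> h \<and> h \<le> n \<and> 0 < i \<and> i < h)"

definition factorS :: "(nat \<times> nat) list \<Rightarrow> nat \<Rightarrow> nat" where
  "factorS f = prodS (map (\<lambda>(h, i). tS h ^^ i) f)"

text \<open>Presentation sigma = sigma^(1) ... sigma^(z) satisfying the conditions of an
  elementary factorization (without minimality).\<close>
definition elem_pres :: "nat \<Rightarrow> (nat \<Rightarrow> nat) \<Rightarrow> (nat \<times> nat) list list \<Rightarrow> bool" where
  "elem_pres n \<sigma> fs \<longleftrightarrow>
     (\<forall>f \<in> set fs. factor_ok n f) \<and>
     \<sigma> = prodS (map factorS fs) \<and>
     (fs \<noteq> [] \<longrightarrow> maj n (factorS (fs ! 0)) \<le> fst (hd (fs ! 0))) \<and>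
     (\<forall>v. 0 < v \<and> v < length fs \<longrightarrow>
        fst (last (fs ! (v - 1))) \<le> maj n (factorS (fs ! v)) \<and>
        maj n (factorS (fs ! v)) \<le> fst (hd (fs ! v)))"

definition elem_fact :: "nat \<Rightarrow> (nat \<Rightarrow> nat) \<Rightarrow> (nat \<times> nat) list list \<Rightarrow> bool" where
  "elem_fact n \<sigma> fs \<longleftrightarrow> elem_pres n \<sigma> fs \<and> (\<forall>gs. elem_pres n \<sigma> gs \<longrightarrow> length fs \<le> length gs)"

section \<open>The Coxeter group D_n, realised as even signed permutations of {+-1,...,+-n}\<close>

definition dS :: "nat \<Rightarrow> int \<Rightarrow> int" where
  "dS i = (\<lambda>x. if x = int i then int i + 1 else if x = int i + 1 then int i
              else if x = - int i then - (int i + 1) else if x = - (int i + 1) then - int i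
              else x)"

definition dP :: "int \<Rightarrow> int" where
  "dP = (\<lambda>x. if x = 1 then -2 else if x = 2 then -1 else if x = -1 then 2
              else if x = -2 then 1 else x)"

definition prodD :: "(int \<Rightarrow> int) list \<Rightarrow> int \<Rightarrow> int" where
  "prodD fs = foldr (\<circ>) fs id"

fun genD :: "gen \<Rightarrow> int \<Rightarrow> int" where
  "genD Gp = dP"
| "genD (G i) = dS i"

definition evalD :: "gen list \<Rightarrow> int \<Rightarrow> int" where
  "evalD ws = prodD (map genD ws)"

fun genPhi :: "gen \<Rightarrow> nat \<Rightarrow> nat" where
  "genPhi Gp = sS 1"
| "genPhi (G i) = sS i"

definition evalPhi :: "gen list \<Rightarrow> nat \<Rightarrow> nat" where
  "evalPhi ws = prodS (map genPhi ws)"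

definition tD :: "nat \<Rightarrow> int \<Rightarrow> int" where
  "tD k = prodD (map dS [1..<k])"

definition wD :: "nat \<Rightarrow> int \<Rightarrow> int" where
  "wD k = prodD (map dS (rev [1..<k+1]) @ [dP] @ map dS [2..<k+1])"

definition factorD :: "(nat \<times> nat) list \<Rightarrow> int \<Rightarrow> int" where
  "factorD f = prodD (map (\<lambda>(h, i). tD h ^^ i) f)"

end

theory Submission
  imports Defs
begin

(* D_n acts faithfully on {+-1, ..., +-n} by even signed permutations. The sign-preserving lift
   signed_lift sigma : x |-> sgn x * sigma |x| is a homomorphism from S_n with s_i |-> s_i, and
   conjugating it by the sign change of +-1 gives a second homomorphism twisted_lift with s_i |-> s_i
   for i >= 2 but s_1 |-> s_1'. So twisted_lift inverts Phi on <s_1', s_2, ..., s_(n-1)>, whence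
   pi = twisted_lift pi'(1) ... twisted_lift pi'(z), while tau_v = signed_lift pi'(v).
   If sigma is injective, twisted_lift sigma = signed_lift sigma when sigma 1 = 1, and
   twisted_lift sigma = w_m o signed_lift sigma when sigma 1 = m + 1 (m >= 1), as w_m changes the
   signs of +-1 and +-(m+1). A factor sigma of the factorization has sigma 1 = 1 if maj = h_1 and
   sigma 1 = maj + 1 otherwise.
   Of the factorization only the inequality maj <= h_1 of each factor is used (not minimality or
   the chaining conditions). *)

lemma prodS_Nil [simp]: "prodS [] = id"
  by (simp add: prodS_def)

lemma prodS_Cons [simp]: "prodS (f # fs) = f \<circ> prodS fs"
  by (simp add: prodS_def)

lemma prodS_append: "prodS (xs @ ys) = prodS xs \<circ> prodS ys"
  by (induction xs) (auto simp: comp_assoc)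

lemma prodD_Nil [simp]: "prodD [] = id"
  by (simp add: prodD_def)

lemma prodD_Cons [simp]: "prodD (f # fs) = f \<circ> prodD fs"
  by (simp add: prodD_def)

lemma prodD_append: "prodD (xs @ ys) = prodD xs \<circ> prodD ys"
  by (induction xs) (auto simp: comp_assoc)

lemma bij_sS: "bij (sS i)"
proof -
  have "sS i \<circ> sS i = id"
    by (auto simp: sS_def fun_eq_iff)
  then show ?thesis
    using o_bij by blast
qed

lemma bij_prodS: "(\<And>p. p \<in> set ps \<Longrightarrow> bij p) \<Longrightarrow> bij (prodS ps)"
  by (induction ps) (auto intro: bij_comp)

lemma bij_tS_funpow: "bij (tS k ^^ j)"
proof -
  have "bij (tS k)"
    unfolding tS_def by (rule bij_prodS) (auto simp: bij_sS)
  then show ?thesis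
    using bij_betw_funpow by blast
qed

lemma bij_factorS: "bij (factorS f)"
  unfolding factorS_def by (rule bij_prodS) (auto intro: bij_tS_funpow)

lemma tS_Suc: "1 \<le> k \<Longrightarrow> tS (Suc k) = tS k \<circ> sS k"
  by (simp add: tS_def prodS_append)

lemma tS_apply: "1 \<le> x \<Longrightarrow> tS k x = (if x < k then Suc x else if x = k then 1 else x)"
proof (induction k arbitrary: x)
  case 0
  then show ?case by (simp add: tS_def)
next
  case (Suc k)
  show ?case
  proof (cases "k = 0")
    case True
    then show ?thesis using Suc.prems by (simp add: tS_def)
  next
    case False
    then show ?thesis using Suc by (simp add: tS_Suc sS_def)
  qed
qed

lemma tS_funpow_apply: "1 \<le> x \<Longrightarrow> x + j \<le> h \<Longrightarrow> (tS h ^^ j) x = x + j"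
  by (induction j) (auto simp: tS_apply)

lemma tS_funpow_apply_wrap: "1 \<le> x \<Longrightarrow> x + j = Suc h \<Longrightarrow> 0 < j \<Longrightarrow> (tS h ^^ j) x = 1"
proof -
  assume "1 \<le> x" "x + j = Suc h" "0 < j"
  moreover from this obtain j' where "j = Suc j'"
    using gr0_implies_Suc by blast
  ultimately show ?thesis
    using tS_funpow_apply[of x j' h] by (simp add: tS_apply)
qed

lemma prodS_apply_fixed: "(\<And>p. p \<in> set ps \<Longrightarrow> p x = x) \<Longrightarrow> prodS ps x = x"
  by (induction ps) auto

lemma ogs_prod_apply_gt: "n < x \<Longrightarrow> ogs_prod n e x = x"
proof -
  assume "n < x"
  then have "(tS k ^^ j) x = x" if "k \<le> n" for k j
    using that by (induction j) (auto simp: tS_apply)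
  then show ?thesis
    unfolding ogs_prod_def by (intro prodS_apply_fixed) auto
qed

lemma bij_ogs_prod: "bij (ogs_prod n e)"
  unfolding ogs_prod_def by (rule bij_prodS) (auto simp: bij_tS_funpow)

lemma ogs_prod_Suc:
  "1 \<le> n \<Longrightarrow> ogs_prod (Suc n) e = ogs_prod n e \<circ> (tS (Suc n) ^^ e (Suc n))"
  by (simp add: ogs_prod_def prodS_append)

lemma ogs_prod_upd: "ogs_prod n (e(Suc n := 0)) = ogs_prod n e"
  unfolding ogs_prod_def by (intro arg_cong[where f = prodS]) auto

lemma ogs_exp_less: "ogs_exp n e \<Longrightarrow> 2 \<le> k \<Longrightarrow> k \<le> n \<Longrightarrow> e k < k"
  by (simp add: ogs_exp_def)

lemma ogs_exp_zero: "ogs_exp n e \<Longrightarrow> \<not> (2 \<le> k \<and> k \<le> n) \<Longrightarrow> e k = 0"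
  by (simp add: ogs_exp_def)

lemma ogs_exp_upd:
  assumes "ogs_exp (Suc n) e"
  shows "ogs_exp n (e(Suc n := 0))"
  unfolding ogs_exp_def
proof (intro allI conjI impI)
  fix k
  assume "2 \<le> k \<and> k \<le> n"
  then show "(e(Suc n := 0)) k < k"
    using ogs_exp_less[OF assms, of k] by simp
next
  fix k
  assume "\<not> (2 \<le> k \<and> k \<le> n)"
  then show "(e(Suc n := 0)) k = 0"
    using ogs_exp_zero[OF assms, of k] by auto
qed

lemma ogs_prod_unique:
  "ogs_exp n e \<Longrightarrow> ogs_exp n e' \<Longrightarrow> ogs_prod n e = ogs_prod n e' \<Longrightarrow> e = e'"
proof (induction n arbitrary: e e')
  case 0
  then show ?case by (simp add: ogs_exp_zero fun_eq_iff)
next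
  case (Suc n)
  let ?N = "Suc n"
  show ?case
  proof (cases "n = 0")
    case True
    then show ?thesis using Suc.prems by (simp add: ogs_exp_zero fun_eq_iff)
  next
    case False
    have less: "e ?N < ?N" "e' ?N < ?N"
      using Suc.prems(1,2) False by (simp_all add: ogs_exp_less)
    have split: "ogs_prod ?N d = ogs_prod n d \<circ> (tS ?N ^^ d ?N)" for d
      using False by (simp add: ogs_prod_Suc)
    have top_preimage: "ogs_prod ?N d (?N - d ?N) = ?N" if "d ?N < ?N" for d
    proof -
      have "(tS ?N ^^ d ?N) (?N - d ?N) = ?N"
        using that tS_funpow_apply[of "?N - d ?N" "d ?N" ?N] by simp
      then show ?thesis
        by (simp only: split comp_apply ogs_prod_apply_gt lessI)
    qed
    have "ogs_prod ?N e (?N - e ?N) = ogs_prod ?N e (?N - e' ?N)"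
      using top_preimage[of e, OF less(1)] top_preimage[of e', OF less(2)] Suc.prems(3)
      by (simp only:)
    then have top: "e ?N = e' ?N"
      using less injD[OF bij_is_inj[OF bij_ogs_prod]] by fastforce
    have "ogs_prod n e \<circ> (tS ?N ^^ e ?N) = ogs_prod n e' \<circ> (tS ?N ^^ e ?N)"
      using Suc.prems(3) by (simp only: split top)
    then have "ogs_prod n e = ogs_prod n e'"
      by (intro surj_fun_eq[OF bij_is_surj[OF bij_tS_funpow[of "e ?N" ?N]]]) simp
    then have "e(?N := 0) = e'(?N := 0)"
      using Suc.IH[OF ogs_exp_upd[OF Suc.prems(1)] ogs_exp_upd[OF Suc.prems(2)]]
      by (simp only: ogs_prod_upd)
    then show ?thesis
      using top unfolding fun_eq_iff by (metis fun_upd_apply)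
  qed
qed

lemma maj_ogs_prod:
  assumes "ogs_exp n e"
  shows "maj n (ogs_prod n e) = (\<Sum>k\<in>{2..n}. e k)"
proof -
  have "(THE e'. ogs_exp n e' \<and> ogs_prod n e = ogs_prod n e') = e"
  proof (rule the_equality)
    show "ogs_exp n e \<and> ogs_prod n e = ogs_prod n e"
      using assms by simp
  next
    fix e'
    assume "ogs_exp n e' \<and> ogs_prod n e = ogs_prod n e'"
    then show "e' = e"
      using assms ogs_prod_unique by metis
  qed
  then show ?thesis
    by (simp add: maj_def)
qed

definition factor_exps :: "(nat \<times> nat) list \<Rightarrow> nat \<Rightarrow> nat" where
  "factor_exps f k = (case map_of f k of None \<Rightarrow> 0 | Some i \<Rightarrow> i)"

lemma foldr_factor_exps:
  assumes "sorted_wrt (<) (map fst f)" and "\<forall>(h, i) \<in> set f. a \<le> h \<and> h < b"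
    and unit: "\<And>k. F (P k 0) = id"
  shows "foldr F (map (\<lambda>k. P k (factor_exps f k)) [a..<b]) = foldr F (map (case_prod P) f)"
proof -
  have units: "foldr F (map (\<lambda>k. P k 0) ks) = id" for ks
    by (induction ks) (simp_all add: unit)
  show ?thesis
    using assms(1,2)
  proof (induction f arbitrary: a)
    case Nil
    then show ?case
      by (simp add: factor_exps_def units)
  next
    case (Cons hi rest)
    obtain h i where hi: "hi = (h, i)"
      by fastforce
    have range: "a \<le> h" "h < b" and later: "\<forall>(h', i') \<in> set rest. h < h'"
      using Cons.prems hi by auto
    have "[a..<b] = [a..<h] @ [h..<b]"
      using range upt_add_eq_append[of a h "b - h"] by simp
    then have split: "[a..<b] = [a..<h] @ h # [Suc h..<b]"
      using range upt_conv_Cons[of h b] by simp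
    have "factor_exps (hi # rest) k = 0" if "k < h" for k
    proof -
      have "k \<notin> fst ` set rest"
        using later that by fastforce
      then have "map_of rest k = None"
        by (simp add: map_of_eq_None_iff)
      then show ?thesis
        using that hi by (simp add: factor_exps_def)
    qed
    then have low: "map (\<lambda>k. P k (factor_exps (hi # rest) k)) [a..<h] = map (\<lambda>k. P k 0) [a..<h]"
      by simp
    have high: "map (\<lambda>k. P k (factor_exps (hi # rest) k)) [Suc h..<b]
        = map (\<lambda>k. P k (factor_exps rest k)) [Suc h..<b]"
      using hi by (simp add: factor_exps_def)
    have at_h: "factor_exps (hi # rest) h = i"
      using hi by (simp add: factor_exps_def)
    have "foldr F (map (\<lambda>k. P k (factor_exps rest k)) [Suc h..<b])
        = foldr F (map (case_prod P) rest)"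
      using Cons.prems later by (intro Cons.IH) auto
    then show ?case
      by (simp only: split map_append list.map foldr_append foldr_Cons low high at_h units)
        (simp add: hi)
  qed
qed

lemma factor_exps_ogs_exp: "factor_ok n f \<Longrightarrow> ogs_exp n (factor_exps f)"
  unfolding ogs_exp_def factor_exps_def factor_ok_def
  by (auto split: option.split dest!: map_of_SomeD)

lemma factorS_eq_ogs_prod: "factor_ok n f \<Longrightarrow> factorS f = ogs_prod n (factor_exps f)"
  unfolding factorS_def ogs_prod_def prodS_def factor_ok_def
  by (subst foldr_factor_exps) auto

lemma maj_factorS: "factor_ok n f \<Longrightarrow> maj n (factorS f) = sum_list (map snd f)"
proof -
  assume ok: "factor_ok n f"
  have "(\<Sum>k\<in>{2..n}. factor_exps f k) = sum_list (map (factor_exps f) [2..<Suc n])"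
    using sum_set_upt_conv_sum_list_nat[of "factor_exps f" 2 "Suc n"]
    by (simp only: set_upt atLeastLessThanSuc_atLeastAtMost)
  also have "\<dots> = foldr (+) (map (factor_exps f) [2..<Suc n]) 0"
    by (rule sum_list.eq_foldr)
  also have "\<dots> = foldr (+) (map (\<lambda>(h, i). i) f) 0"
    using foldr_factor_exps[of f 2 "Suc n" "(+)" "\<lambda>k i. i"] ok
    by (fastforce simp: factor_ok_def)
  also have "\<dots> = foldr (+) (map snd f) 0"
    by (induction f) auto
  finally show ?thesis
    using ok by (simp add: factorS_eq_ogs_prod maj_ogs_prod factor_exps_ogs_exp sum_list.eq_foldr)
qed

lemma factorS_apply_1_below:
  "\<forall>(h, i) \<in> set f. sum_list (map snd f) < h \<Longrightarrow> factorS f 1 = Suc (sum_list (map snd f))"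
proof (induction f)
  case Nil
  then show ?case by (simp add: factorS_def)
next
  case (Cons hi rest)
  obtain h i where hi: "hi = (h, i)"
    by fastforce
  then have "factorS rest 1 = Suc (sum_list (map snd rest))"
    using Cons by (intro Cons.IH) auto
  then show ?case
    using Cons.prems hi by (simp add: factorS_def tS_funpow_apply)
qed

(* Each t_h^i shifts the current image of 1 up by i while it stays at most h; since
   h_1 < h_2 < ..., only the leftmost factor can wrap around, exactly when maj = h_1. *)
lemma factorS_apply_1:
  assumes ok: "factor_ok n f" and elementary: "sum_list (map snd f) \<le> fst (hd f)"
  shows "factorS f 1 =
    (if sum_list (map snd f) = fst (hd f) then 1 else Suc (sum_list (map snd f)))"
proof -
  obtain h i rest where f: "f = (h, i) # rest"
    using ok by (cases f) (auto simp: factor_ok_def)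
  have i: "0 < i" "i < h" and later: "\<forall>(h', i') \<in> set rest. h < h'"
    using ok by (auto simp: factor_ok_def f)
  show ?thesis
  proof (cases "sum_list (map snd f) < h")
    case True
    then show ?thesis
      using later f by (subst factorS_apply_1_below) auto
  next
    case False
    then have sum: "sum_list (map snd rest) + i = h"
      using elementary f by simp
    then have "factorS rest 1 = Suc (sum_list (map snd rest))"
      using later i by (intro factorS_apply_1_below) auto
    then have "factorS f 1 = 1"
      using sum i by (simp add: f factorS_def tS_funpow_apply_wrap)
    then show ?thesis
      using sum f by simp
  qed
qed

definition pos_preserving :: "(nat \<Rightarrow> nat) \<Rightarrow> bool" where
  "pos_preserving p \<longleftrightarrow> (\<forall>k>0. 0 < p k)"

definition signed_lift :: "(nat \<Rightarrow> nat) \<Rightarrow> int \<Rightarrow> int" where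
  "signed_lift p x = sgn x * int (p (nat \<bar>x\<bar>))"

definition flip_one :: "int \<Rightarrow> int" where
  "flip_one x = (if \<bar>x\<bar> = 1 then - x else x)"

definition twisted_lift :: "(nat \<Rightarrow> nat) \<Rightarrow> int \<Rightarrow> int" where
  "twisted_lift p = flip_one \<circ> signed_lift p \<circ> flip_one"

lemma pos_preserving_id: "pos_preserving id"
  by (simp add: pos_preserving_def)

lemma pos_preserving_comp: "pos_preserving p \<Longrightarrow> pos_preserving q \<Longrightarrow> pos_preserving (p \<circ> q)"
  by (simp add: pos_preserving_def)

lemma pos_preserving_funpow: "pos_preserving p \<Longrightarrow> pos_preserving (p ^^ k)"
  by (induction k) (simp_all add: pos_preserving_id pos_preserving_comp)

lemma pos_preserving_prodS:
  "(\<And>p. p \<in> set ps \<Longrightarrow> pos_preserving p) \<Longrightarrow> pos_preserving (prodS ps)"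
  by (induction ps) (simp_all add: pos_preserving_id pos_preserving_comp)

lemma pos_preserving_sS: "1 \<le> i \<Longrightarrow> pos_preserving (sS i)"
  by (simp add: pos_preserving_def sS_def)

lemma pos_preserving_tS_funpow: "pos_preserving (tS k ^^ j)"
  unfolding tS_def by (intro pos_preserving_funpow pos_preserving_prodS) (auto simp: pos_preserving_sS)

lemma pos_preserving_factorS: "pos_preserving (factorS f)"
  unfolding factorS_def by (intro pos_preserving_prodS) (auto simp: pos_preserving_tS_funpow)

lemma signed_lift_id: "signed_lift id = id"
  by (simp add: signed_lift_def fun_eq_iff sgn_if)

lemma signed_lift_comp:
  assumes "pos_preserving q"
  shows "signed_lift (p \<circ> q) = signed_lift p \<circ> signed_lift q"
proof
  fix x :: int
  have "x \<noteq> 0 \<Longrightarrow> 0 < q (nat \<bar>x\<bar>)"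
    using assms by (simp add: pos_preserving_def)
  then show "signed_lift (p \<circ> q) x = (signed_lift p \<circ> signed_lift q) x"
    by (cases "x = 0") (auto simp: signed_lift_def sgn_if abs_mult)
qed

lemma signed_lift_funpow: "pos_preserving p \<Longrightarrow> signed_lift p ^^ k = signed_lift (p ^^ k)"
  by (induction k) (simp_all add: signed_lift_id signed_lift_comp pos_preserving_funpow)

lemma signed_lift_prodS:
  "(\<And>p. p \<in> set ps \<Longrightarrow> pos_preserving p) \<Longrightarrow> prodD (map signed_lift ps) = signed_lift (prodS ps)"
  by (induction ps) (simp_all add: signed_lift_id signed_lift_comp pos_preserving_prodS)

lemma flip_one_flip_one [simp]: "flip_one (flip_one x) = x"
  by (simp add: flip_one_def)

lemma twisted_lift_id: "twisted_lift id = id"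
  by (simp add: twisted_lift_def signed_lift_id fun_eq_iff)

lemma twisted_lift_comp:
  "pos_preserving q \<Longrightarrow> twisted_lift (p \<circ> q) = twisted_lift p \<circ> twisted_lift q"
  by (simp add: twisted_lift_def signed_lift_comp fun_eq_iff)

lemma twisted_lift_prodS:
  "(\<And>p. p \<in> set ps \<Longrightarrow> pos_preserving p) \<Longrightarrow> prodD (map twisted_lift ps) = twisted_lift (prodS ps)"
  by (induction ps) (simp_all add: twisted_lift_id twisted_lift_comp pos_preserving_prodS)

lemma dS_eq_signed_lift: "1 \<le> i \<Longrightarrow> dS i = signed_lift (sS i)"
  by (auto simp: dS_def signed_lift_def sS_def fun_eq_iff sgn_if nat_eq_iff)

lemma dS_eq_twisted_lift: "2 \<le> i \<Longrightarrow> dS i = twisted_lift (sS i)"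
  by (auto simp: dS_def signed_lift_def sS_def twisted_lift_def flip_one_def fun_eq_iff sgn_if nat_eq_iff)

lemma dP_eq_twisted_lift: "dP = twisted_lift (sS 1)"
  by (auto simp: dP_def signed_lift_def sS_def twisted_lift_def flip_one_def fun_eq_iff sgn_if nat_eq_iff)

lemma factorD_eq_signed_lift: "factorD f = signed_lift (factorS f)"
proof -
  have "tD h = signed_lift (tS h)" for h
  proof -
    have gens: "map dS [1..<h] = map signed_lift (map sS [1..<h])"
      by (simp add: dS_eq_signed_lift)
    show ?thesis
      unfolding tD_def tS_def gens by (rule signed_lift_prodS) (auto simp: pos_preserving_sS)
  qed
  then have factors: "map (\<lambda>(h, i). tD h ^^ i) f = map signed_lift (map (\<lambda>(h, i). tS h ^^ i) f)"
    using pos_preserving_tS_funpow[of 1] by (auto simp: signed_lift_funpow)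
  show ?thesis
    unfolding factorD_def factorS_def factors
    by (rule signed_lift_prodS) (auto simp: pos_preserving_tS_funpow)
qed

lemma evalD_eq_twisted_lift:
  assumes "\<forall>g \<in> set ws. g = Gp \<or> (\<exists>i. g = G i \<and> 2 \<le> i)"
  shows "evalD ws = twisted_lift (evalPhi ws)"
proof -
  have gens: "map genD ws = map twisted_lift (map genPhi ws)"
    using assms by (auto simp: dP_eq_twisted_lift dS_eq_twisted_lift)
  show ?thesis
    unfolding evalD_def evalPhi_def gens
    by (rule twisted_lift_prodS) (use assms in \<open>auto simp: pos_preserving_sS\<close>)
qed

lemma wD_Suc: "1 \<le> k \<Longrightarrow> wD (Suc k) = dS (Suc k) \<circ> wD k \<circ> dS (Suc k)"
  by (simp add: wD_def prodD_append comp_assoc)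

lemma wD_eq: "1 \<le> k \<Longrightarrow> wD k = (\<lambda>x. if \<bar>x\<bar> = 1 \<or> \<bar>x\<bar> = int k + 1 then - x else x)"
proof (induction k rule: dec_induct)
  case base
  show ?case by (auto simp: wD_def dS_def dP_def fun_eq_iff)
next
  case (step k)
  then show ?case by (auto simp: wD_Suc dS_def fun_eq_iff)
qed

lemma twisted_lift_fix_one:
  assumes "inj s" and "s 1 = 1"
  shows "twisted_lift s = signed_lift s"
proof
  fix x :: int
  have "s (nat \<bar>x\<bar>) \<noteq> 1" if "\<bar>x\<bar> \<noteq> 1"
    using assms that injD[OF assms(1), of "nat \<bar>x\<bar>" 1] by auto
  then show "twisted_lift s x = signed_lift s x"
    using assms(2)
    by (cases "\<bar>x\<bar> = 1") (auto simp: twisted_lift_def flip_one_def signed_lift_def abs_mult sgn_if)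
qed

lemma twisted_lift_move_one:
  assumes "inj s" and "s 1 = Suc M" and "1 \<le> M"
  shows "twisted_lift s = wD M \<circ> signed_lift s"
proof
  fix x :: int
  have "s (nat \<bar>x\<bar>) \<noteq> Suc M" if "\<bar>x\<bar> \<noteq> 1"
    using assms that injD[OF assms(1), of "nat \<bar>x\<bar>" 1] by auto
  then show "twisted_lift s x = (wD M \<circ> signed_lift s) x"
    using assms(2,3)
    by (cases "\<bar>x\<bar> = 1") (auto simp: wD_eq twisted_lift_def flip_one_def signed_lift_def abs_mult sgn_if)
qed

lemma twisted_lift_factorS:
  assumes ok: "factor_ok n f" and elementary: "maj n (factorS f) \<le> fst (hd f)"
  shows "twisted_lift (factorS f) =
    (if maj n (factorS f) = fst (hd f) then factorD f else wD (maj n (factorS f)) \<circ> factorD f)"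
proof -
  have maj: "maj n (factorS f) = sum_list (map snd f)"
    using ok by (rule maj_factorS)
  have "1 \<le> sum_list (map snd f)"
    using ok by (cases f) (auto simp: factor_ok_def)
  moreover have "factorS f 1 =
      (if sum_list (map snd f) = fst (hd f) then 1 else Suc (sum_list (map snd f)))"
    using ok elementary[unfolded maj] by (rule factorS_apply_1)
  ultimately show ?thesis
    using bij_is_inj[OF bij_factorS]
    by (simp add: maj factorD_eq_signed_lift twisted_lift_fix_one twisted_lift_move_one)
qed

lemma elem_pres_maj_le_hd:
  assumes "elem_pres n \<sigma> fs" and "f \<in> set fs"
  shows "maj n (factorS f) \<le> fst (hd f)"
proof -
  obtain v where "v < length fs" and "fs ! v = f"
    using assms(2) by (auto simp: in_set_conv_nth)
  then show ?thesis
    using assms(1) unfolding elem_pres_def by (cases "v = 0") auto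
qed

theorem mainTheorem10:
  fixes n :: nat and ws :: "gen list" and fs :: "(nat \<times> nat) list list"
  assumes "n \<ge> 2"
    and "\<forall>g \<in> set ws. g = Gp \<or> (\<exists>i. g = G i \<and> 2 \<le> i \<and> i \<le> n - 1)"
    and "elem_fact n (evalPhi ws) fs"
  shows "evalD ws =
           prodD (map (\<lambda>f. if maj n (factorS f) = fst (hd f) then factorD f
                           else wD (maj n (factorS f)) \<circ> factorD f) fs)"
proof -
  have pres: "elem_pres n (evalPhi ws) fs"
    using assms(3) by (simp add: elem_fact_def)
  have factors: "twisted_lift (factorS f) = (if maj n (factorS f) = fst (hd f) then factorD f
                   else wD (maj n (factorS f)) \<circ> factorD f)" if "f \<in> set fs" for f
    using pres that by (intro twisted_lift_factorS elem_pres_maj_le_hd) (auto simp: elem_pres_def)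
  have "evalD ws = twisted_lift (evalPhi ws)"
    using assms(2) by (intro evalD_eq_twisted_lift) auto
  also have "\<dots> = twisted_lift (prodS (map factorS fs))"
    using pres by (simp add: elem_pres_def)
  also have "\<dots> = prodD (map twisted_lift (map factorS fs))"
    by (rule twisted_lift_prodS[symmetric]) (auto simp: pos_preserving_factorS)
  also have "\<dots> = prodD (map (\<lambda>f. if maj n (factorS f) = fst (hd f) then factorD f
                                  else wD (maj n (factorS f)) \<circ> factorD f) fs)"
    unfolding map_map by (intro arg_cong[where f = prodD] map_cong) (simp_all add: factors)
  finally show ?thesis .
qed

end
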